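(* Let $0\to N\to G\xrightarrow{p} Q\to 1$ be a short exact sequence of groups with $N$ abelian (written additively), and let $End^Q_N(G)$ be the set of endomorphisms $\alpha$ of $G$ with $\alpha(N)\subseteq N$ and $p\circ\alpha=p$, equipped with the ring structure with addition $(\alpha_1\boxplus\alpha_2)(x)=\alpha_1(x)-x+\alpha_2(x)$, multiplication $(\alpha_2\boxtimes\alpha_1)(x)=\alpha_2(\alpha_1(x))-\alpha_1(x)+x-\alpha_2(x)+x$ and zero element $\mathrm{id}_G$. Then for all $f,g\in End^Q_N(G)$ one has $f\ast g=f\circ g$, where $f\ast g:=f\boxplus g\boxplus(f\boxtimes g)$. In particular the group $QR(End^Q_N(G))$ of quasi-regular elements coincides with the group $Aut^Q_N(G)$ of automorphisms in $End^Q_N(G)$ under composition.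
   Context: For a ring $R$ with zero $0$, $r\ast s:=r+s+rs$; $r$ is quasi-regular if there is $s$ with $r\ast s=0=s\ast r$, and the quasi-regular elements form a group $QR(R)$ under $\ast$. *)

theory Defs
  imports "HOL-Algebra.Algebra"
begin

(* The group G is written multiplicatively in HOL-Algebra: additive x - y + z
   of the paper is  x \<otimes> inv y \<otimes> z  here.  Maps G -> G are taken
   extensional on carrier G so that function equality is meaningful. *)

definition idG :: "('g, 'b) monoid_scheme \<Rightarrow> 'g \<Rightarrow> 'g" where
  "idG G = (\<lambda>x\<in>carrier G. x)"

definition EndQN :: "('g, 'b) monoid_scheme \<Rightarrow> ('g \<Rightarrow> 'q) \<Rightarrow> 'g set \<Rightarrow> ('g \<Rightarrow> 'g) set" where
  "EndQN G p N = {\<alpha>. \<alpha> \<in> hom G G \<and> \<alpha> \<in> extensional (carrier G) \<and> \<alpha> ` N \<subseteq> N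
                       \<and> (\<forall>x\<in>carrier G. p (\<alpha> x) = p x)}"

definition AutQN :: "('g, 'b) monoid_scheme \<Rightarrow> ('g \<Rightarrow> 'q) \<Rightarrow> 'g set \<Rightarrow> ('g \<Rightarrow> 'g) set" where
  "AutQN G p N = {\<alpha> \<in> EndQN G p N. bij_betw \<alpha> (carrier G) (carrier G)}"

definition boxplus :: "('g, 'b) monoid_scheme \<Rightarrow> ('g \<Rightarrow> 'g) \<Rightarrow> ('g \<Rightarrow> 'g) \<Rightarrow> 'g \<Rightarrow> 'g" where
  "boxplus G a1 a2 = (\<lambda>x\<in>carrier G. a1 x \<otimes>\<^bsub>G\<^esub> inv\<^bsub>G\<^esub> x \<otimes>\<^bsub>G\<^esub> a2 x)"

definition boxtimes :: "('g, 'b) monoid_scheme \<Rightarrow> ('g \<Rightarrow> 'g) \<Rightarrow> ('g \<Rightarrow> 'g) \<Rightarrow> 'g \<Rightarrow> 'g" where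
  "boxtimes G a2 a1 = (\<lambda>x\<in>carrier G. a2 (a1 x) \<otimes>\<^bsub>G\<^esub> inv\<^bsub>G\<^esub> (a1 x) \<otimes>\<^bsub>G\<^esub> x
                          \<otimes>\<^bsub>G\<^esub> inv\<^bsub>G\<^esub> (a2 x) \<otimes>\<^bsub>G\<^esub> x)"

definition qstar :: "('g, 'b) monoid_scheme \<Rightarrow> ('g \<Rightarrow> 'g) \<Rightarrow> ('g \<Rightarrow> 'g) \<Rightarrow> 'g \<Rightarrow> 'g" where
  "qstar G f g = boxplus G (boxplus G f g) (boxtimes G f g)"

(* quasi-regular elements of the ring End^Q_N(G), whose zero is id_G *)
definition QR_EndQN :: "('g, 'b) monoid_scheme \<Rightarrow> ('g \<Rightarrow> 'q) \<Rightarrow> 'g set \<Rightarrow> ('g \<Rightarrow> 'g) set" where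
  "QR_EndQN G p N = {r \<in> EndQN G p N. \<exists>s\<in>EndQN G p N.
        qstar G r s = idG G \<and> qstar G s r = idG G}"

end

theory Submission
  imports Defs
begin

text \<open>Every \<open>f \<in> End^Q_N(G)\<close> moves each \<open>x\<close> by an element of \<open>N\<close>: \<open>f x = u + x\<close> with
  \<open>u \<in> N\<close>. Writing \<open>g x = v + x\<close> and \<open>f (g x) = w + g x\<close>, the defining expression of
  \<open>f \<ast> g\<close> at \<open>x\<close> collapses to \<open>u + v + w - u + x\<close>, and since \<open>N\<close> is abelian this is
  \<open>w + v + x = f (g x)\<close>. Hence \<open>\<ast>\<close> is composition, so quasi-inverses are exactly
  two-sided compositional inverses, which lie again in \<open>End^Q_N(G)\<close>.\<close>

lemma (in group) quasi_product_collapse: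
  assumes x: "x \<in> carrier G" and a: "a \<in> carrier G" and b: "b \<in> carrier G" and c: "c \<in> carrier G"
    and uv: "(a \<otimes> inv x) \<otimes> (b \<otimes> inv x) = (b \<otimes> inv x) \<otimes> (a \<otimes> inv x)"
    and uw: "(a \<otimes> inv x) \<otimes> (c \<otimes> inv b) = (c \<otimes> inv b) \<otimes> (a \<otimes> inv x)"
    and vw: "(b \<otimes> inv x) \<otimes> (c \<otimes> inv b) = (c \<otimes> inv b) \<otimes> (b \<otimes> inv x)"
  shows "a \<otimes> inv x \<otimes> b \<otimes> inv x \<otimes> (c \<otimes> inv b \<otimes> x \<otimes> inv a \<otimes> x) = c"
proof -
  define u where "u = a \<otimes> inv x"
  define v where "v = b \<otimes> inv x"
  define w where "w = c \<otimes> inv b"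
  have carr: "u \<in> carrier G" "v \<in> carrier G" "w \<in> carrier G"
    using x a b c by (simp_all add: u_def v_def w_def)
  note uv' = uv[folded u_def v_def] and uw' = uw[folded u_def w_def]
    and vw' = vw[folded v_def w_def]
  have cancel: "\<And>y z. y \<in> carrier G \<Longrightarrow> z \<in> carrier G \<Longrightarrow> y \<otimes> (inv y \<otimes> z) = z"
    by (simp add: m_assoc[symmetric])
  have a_eq: "a = u \<otimes> x" and b_eq: "b = v \<otimes> x"
    using x a b by (simp_all add: u_def v_def m_assoc)
  have c_eq: "c = w \<otimes> (v \<otimes> x)"
    using b c by (simp add: w_def m_assoc flip: b_eq)
  have "a \<otimes> inv x \<otimes> b \<otimes> inv x \<otimes> (c \<otimes> inv b \<otimes> x \<otimes> inv a \<otimes> x) = u \<otimes> v \<otimes> w \<otimes> inv u \<otimes> x"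
    using x carr by (simp add: a_eq b_eq c_eq m_assoc inv_mult_group cancel)
  also have "u \<otimes> v \<otimes> w = v \<otimes> u \<otimes> w"
    by (simp only: uv')
  also have "\<dots> = v \<otimes> (u \<otimes> w)"
    using carr by (simp only: m_assoc)
  also have "\<dots> = v \<otimes> w \<otimes> u"
    using carr by (simp only: uw' m_assoc)
  also have "v \<otimes> w \<otimes> u \<otimes> inv u \<otimes> x = w \<otimes> (v \<otimes> x)"
    using x carr by (simp add: m_assoc vw')
  also have "\<dots> = c"
    by (rule c_eq[symmetric])
  finally show ?thesis .
qed

lemma qstar_apply:
  "x \<in> carrier G \<Longrightarrow> qstar G f g x =
     f x \<otimes>\<^bsub>G\<^esub> inv\<^bsub>G\<^esub> x \<otimes>\<^bsub>G\<^esub> g x \<otimes>\<^bsub>G\<^esub> inv\<^bsub>G\<^esub> x \<otimes>\<^bsub>G\<^esub>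
       (f (g x) \<otimes>\<^bsub>G\<^esub> inv\<^bsub>G\<^esub> (g x) \<otimes>\<^bsub>G\<^esub> x \<otimes>\<^bsub>G\<^esub> inv\<^bsub>G\<^esub> (f x) \<otimes>\<^bsub>G\<^esub> x)"
  by (simp add: qstar_def boxplus_def boxtimes_def)

lemma (in group_hom) mult_inv_in_kernel_of_same_image:
  assumes "x \<in> carrier G" "y \<in> carrier G" "h y = h x"
  shows "y \<otimes>\<^bsub>G\<^esub> inv\<^bsub>G\<^esub> x \<in> kernel G H h"
  using assms by (simp add: kernel_def hom_mult hom_inv)

lemma EndQN_closed: "f \<in> EndQN G p N \<Longrightarrow> x \<in> carrier G \<Longrightarrow> f x \<in> carrier G"
  unfolding EndQN_def hom_def by auto

lemma EndQN_fibre: "f \<in> EndQN G p N \<Longrightarrow> x \<in> carrier G \<Longrightarrow> p (f x) = p x"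
  unfolding EndQN_def by auto

lemma qstar_eq_compose:
  assumes p: "group_hom G Q p" and N: "N = kernel G Q p"
    and N_comm: "\<forall>x\<in>N. \<forall>y\<in>N. x \<otimes>\<^bsub>G\<^esub> y = y \<otimes>\<^bsub>G\<^esub> x"
    and f: "f \<in> EndQN G p N" and g: "g \<in> EndQN G p N"
  shows "qstar G f g = compose (carrier G) f g"
proof
  interpret group_hom G Q p by (rule p)
  fix x
  show "qstar G f g x = compose (carrier G) f g x"
  proof (cases "x \<in> carrier G")
    case False
    then show ?thesis by (simp add: qstar_def boxplus_def compose_def)
  next
    case x: True
    have gx: "g x \<in> carrier G" using EndQN_closed[OF g x] .
    have in_N: "f x \<otimes>\<^bsub>G\<^esub> inv\<^bsub>G\<^esub> x \<in> N" "g x \<otimes>\<^bsub>G\<^esub> inv\<^bsub>G\<^esub> x \<in> N"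
      "f (g x) \<otimes>\<^bsub>G\<^esub> inv\<^bsub>G\<^esub> (g x) \<in> N"
      using x gx f g by (simp_all add: N mult_inv_in_kernel_of_same_image EndQN_closed EndQN_fibre)
    have "qstar G f g x = f (g x)"
      unfolding qstar_apply[OF x]
      by (rule G.quasi_product_collapse)
        (use x gx f g in_N N_comm in \<open>simp_all add: EndQN_closed\<close>)
    then show ?thesis using x by (simp add: compose_def)
  qed
qed

lemma compose_eq_idG_iff:
  "compose (carrier G) f g = idG G \<longleftrightarrow> (\<forall>x\<in>carrier G. f (g x) = x)"
  unfolding idG_def compose_def by (auto simp: fun_eq_iff restrict_def split: if_splits)

lemma restrict_inv_into_EndQN:
  assumes G: "group G" and N: "N = kernel G Q p" and r: "r \<in> AutQN G p N"
  shows "restrict (inv_into (carrier G) r) (carrier G) \<in> EndQN G p N"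
    (is "?s \<in> _")
proof -
  interpret group G by (rule G)
  have r_End: "r \<in> EndQN G p N" and bij: "bij_betw r (carrier G) (carrier G)"
    using r unfolding AutQN_def by auto
  have "r \<in> iso G G"
    using r_End bij unfolding iso_def EndQN_def by auto
  then have "inv_into (carrier G) r \<in> hom G G"
    using iso_set_sym unfolding iso_def by auto
  then have hom: "?s \<in> hom G G"
    by (rule hom_restrict) simp
  have s_closed: "?s x \<in> carrier G" if "x \<in> carrier G" for x
    using that bij by (auto intro: inv_into_into simp: bij_betw_def)
  have fibre: "p (?s x) = p x" if "x \<in> carrier G" for x
    using EndQN_fibre[OF r_End s_closed[OF that]] that bij by (simp add: bij_betw_def f_inv_into_f)
  have "?s ` N \<subseteq> N"
    using s_closed fibre by (auto simp: N kernel_def)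
  then show ?thesis
    using hom fibre unfolding EndQN_def by auto
qed

lemma QR_EndQN_eq_AutQN_if_qstar_is_compose:
  assumes G: "group G" and N: "N = kernel G Q p"
    and qstar: "\<And>f g. f \<in> EndQN G p N \<Longrightarrow> g \<in> EndQN G p N \<Longrightarrow> qstar G f g = compose (carrier G) f g"
  shows "QR_EndQN G p N = AutQN G p N"
proof
  show "QR_EndQN G p N \<subseteq> AutQN G p N"
  proof
    fix r assume "r \<in> QR_EndQN G p N"
    then obtain s where r: "r \<in> EndQN G p N" and s: "s \<in> EndQN G p N"
      and "qstar G r s = idG G" and "qstar G s r = idG G"
      unfolding QR_EndQN_def by blast
    then have "\<forall>x\<in>carrier G. r (s x) = x" and "\<forall>x\<in>carrier G. s (r x) = x"
      by (simp_all add: qstar compose_eq_idG_iff)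
    then have "bij_betw r (carrier G) (carrier G)"
      by (intro bij_betw_byWitness[where f' = s]) (auto simp: EndQN_closed[OF r] EndQN_closed[OF s])
    then show "r \<in> AutQN G p N"
      using r unfolding AutQN_def by blast
  qed
next
  show "AutQN G p N \<subseteq> QR_EndQN G p N"
  proof
    fix r assume r_Aut: "r \<in> AutQN G p N"
    define s where "s = restrict (inv_into (carrier G) r) (carrier G)"
    have r: "r \<in> EndQN G p N" and bij: "bij_betw r (carrier G) (carrier G)"
      using r_Aut unfolding AutQN_def by auto
    have s: "s \<in> EndQN G p N"
      unfolding s_def using G N r_Aut by (rule restrict_inv_into_EndQN)
    have "\<forall>x\<in>carrier G. r (s x) = x" and "\<forall>x\<in>carrier G. s (r x) = x"
      using bij EndQN_closed[OF r] by (auto simp: s_def bij_betw_def f_inv_into_f inv_into_f_f)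
    then have "qstar G r s = idG G" and "qstar G s r = idG G"
      by (simp_all add: qstar[OF r s] qstar[OF s r] compose_eq_idG_iff)
    then show "r \<in> QR_EndQN G p N"
      using r s unfolding QR_EndQN_def by blast
  qed
qed

theorem lemma14:
  fixes G :: "('g, 'b) monoid_scheme" and Q :: "('q, 'c) monoid_scheme"
    and p :: "'g \<Rightarrow> 'q" and N :: "'g set"
  assumes "group G" and "group Q"
    and "p \<in> hom G Q" and "p ` carrier G = carrier Q"
    and "N = kernel G Q p"
    and "\<forall>x\<in>N. \<forall>y\<in>N. x \<otimes>\<^bsub>G\<^esub> y = y \<otimes>\<^bsub>G\<^esub> x"
  shows "(\<forall>f\<in>EndQN G p N. \<forall>g\<in>EndQN G p N. qstar G f g = compose (carrier G) f g)
         \<and> QR_EndQN G p N = AutQN G p N"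
proof -
  have p: "group_hom G Q p"
    using assms(1-3) by (simp add: group_hom_def group_hom_axioms_def)
  have star_is_compose: "qstar G f g = compose (carrier G) f g"
    if "f \<in> EndQN G p N" "g \<in> EndQN G p N" for f g
    using qstar_eq_compose[OF p assms(5,6) that] .
  then show ?thesis
    using QR_EndQN_eq_AutQN_if_qstar_is_compose[OF assms(1,5)] by blast
qed

end
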